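(* Suppose Assumption 3 holds and the data set is sampled from a distribution having a density with respect to Lebesgue measure. Then with probability $1$, $$\alpha:=\min_{\|\xi\|=1,\ \xi\perp\bar u}\ \max_{i\in S}\langle\xi,z_i\rangle>0 .$$
   Context: Data $(x_i,y_i)_{i=1}^n$ with $x_i\in\mathbb{R}^d$, $\|x_i\|\le 1$, $y_i\in\{-1,+1\}$, $z_i:=y_ix_i$, linearly separable. $\gamma:=\max_{\|u\|=1}\min_i\langle u,z_i\rangle>0$ and $\bar u$ is the unique unit vector attaining it. $S\subseteq\{1,\dots,n\}$ is the set of indices of support vectors, i.e. those $i$ with $\langle\bar u,z_i\rangle=\gamma$. Assumption 3: the support vectors $\{z_i:i\in S\}$ span $\mathbb{R}^d$. *)

theory Defs
  imports "HOL-Probability.Probability"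
begin

text \<open>Data points z i = y i * x i, i < n, in R^d (d encoded by the finite index type 'd).\<close>

definition linsep :: "(nat \<Rightarrow> real^'d) \<Rightarrow> nat \<Rightarrow> bool" where
  "linsep z n \<longleftrightarrow> (\<exists>u. \<forall>i<n. 0 < u \<bullet> z i)"

definition margin :: "(nat \<Rightarrow> real^'d) \<Rightarrow> nat \<Rightarrow> real" where
  "margin z n = (SUP u\<in>sphere 0 1. Min ((\<lambda>i. u \<bullet> z i) ` {..<n}))"

definition maxmargin_dir :: "(nat \<Rightarrow> real^'d) \<Rightarrow> nat \<Rightarrow> real^'d" where
  "maxmargin_dir z n = (THE u. norm u = 1 \<and> Min ((\<lambda>i. u \<bullet> z i) ` {..<n}) = margin z n)"

definition supp_vecs :: "(nat \<Rightarrow> real^'d) \<Rightarrow> nat \<Rightarrow> nat set" where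
  "supp_vecs z n = {i. i < n \<and> maxmargin_dir z n \<bullet> z i = margin z n}"

definition assumption3 :: "(nat \<Rightarrow> real^'d) \<Rightarrow> nat \<Rightarrow> bool" where
  "assumption3 z n \<longleftrightarrow> span (z ` supp_vecs z n) = UNIV"

text \<open>The minimum is attained by compactness when the constraint set is nonempty; we take
  the infimum in the extended reals, so that the empty minimum (d = 1) is +infinity.\<close>
definition alpha :: "(nat \<Rightarrow> real^'d) \<Rightarrow> nat \<Rightarrow> ereal" where
  "alpha z n = (INF \<xi>\<in>{\<xi>. norm \<xi> = 1 \<and> \<xi> \<bullet> maxmargin_dir z n = 0}.
                  ereal (Max ((\<lambda>i. \<xi> \<bullet> z i) ` supp_vecs z n)))"

end

theory Submission
  imports Defs
begin

text \<open>If \<open>\<alpha> \<le> 0\<close>, compactness gives a unit \<open>\<xi> \<perp> ubar\<close> that is non-positive on every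
  support vector. Optimality of \<open>ubar\<close> (there is no descent direction) forces \<open>ubar\<close> into the
  span of the support vectors \<open>z t\<close>, \<open>t \<in> T\<close>, on which \<open>\<xi>\<close> vanishes, while Assumption 3 yields
  a support vector \<open>z i\<close> with \<open>i \<notin> T\<close>. Then \<open>w = ubar / \<gamma>\<close> lies in the span of \<open>z ` T\<close> and
  \<open>w \<bullet> z t = 1\<close> for \<open>t \<in> T \<union> {i}\<close>, so \<open>z i\<close> lies on the hyperplane through the affine hull
  of \<open>z ` T\<close> perpendicular to its point closest to the origin. For fixed labels, \<open>T\<close> and \<open>i\<close>,
  this hyperplane does not depend on \<open>x i\<close>, so by Fubini the event is Lebesgue-null; there are
  finitely many choices, and the law of the data has a density.\<close>

section \<open>The maximal-margin direction\<close>

lemma continuous_on_Min_finite: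
  fixes f :: "'i \<Rightarrow> 'a::topological_space \<Rightarrow> 'b::linorder_topology"
  assumes "finite A" "A \<noteq> {}" "\<And>i. i \<in> A \<Longrightarrow> continuous_on S (f i)"
  shows "continuous_on S (\<lambda>x. Min ((\<lambda>i. f i x) ` A))"
  using assms
proof (induction A rule: finite_ne_induct)
  case (insert a F)
  have "(\<lambda>x. Min ((\<lambda>i. f i x) ` insert a F)) = (\<lambda>x. min (f a x) (Min ((\<lambda>i. f i x) ` F)))"
    using insert by (auto simp: Min_insert)
  then show ?case using insert by (auto intro!: continuous_on_min)
qed simp

lemma continuous_on_Max_finite:
  fixes f :: "'i \<Rightarrow> 'a::topological_space \<Rightarrow> 'b::linorder_topology"
  assumes "finite A" "A \<noteq> {}" "\<And>i. i \<in> A \<Longrightarrow> continuous_on S (f i)"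
  shows "continuous_on S (\<lambda>x. Max ((\<lambda>i. f i x) ` A))"
  using assms
proof (induction A rule: finite_ne_induct)
  case (insert a F)
  have "(\<lambda>x. Max ((\<lambda>i. f i x) ` insert a F)) = (\<lambda>x. max (f a x) (Max ((\<lambda>i. f i x) ` F)))"
    using insert by (auto simp: Max_insert)
  then show ?case using insert by (auto intro!: continuous_on_max)
qed simp

locale max_margin =
  fixes z :: "nat \<Rightarrow> real^'d" and n :: nat
  assumes n_ge_1: "n \<ge> 1" and separable: "linsep z n"
begin

definition margin_at :: "real^'d \<Rightarrow> real" where
  "margin_at u = Min ((\<lambda>i. u \<bullet> z i) ` {..<n})"

abbreviation ubar :: "real^'d" where
  "ubar \<equiv> maxmargin_dir z n"

lemma indices_nonempty: "{..<n} \<noteq> {}"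
  using n_ge_1 by (simp add: lessThan_empty_iff)

lemma margin_at_le: "i < n \<Longrightarrow> margin_at u \<le> u \<bullet> z i"
  unfolding margin_at_def by simp

lemma margin_at_ge_iff: "c \<le> margin_at u \<longleftrightarrow> (\<forall>i<n. c \<le> u \<bullet> z i)"
  unfolding margin_at_def using indices_nonempty by (auto simp: Min_ge_iff)

lemma margin_at_gt_iff: "c < margin_at u \<longleftrightarrow> (\<forall>i<n. c < u \<bullet> z i)"
  unfolding margin_at_def using indices_nonempty by (auto simp: Min_gr_iff)

lemma continuous_margin_at: "continuous_on UNIV margin_at"
  unfolding margin_at_def[abs_def]
  by (rule continuous_on_Min_finite) (auto intro!: continuous_intros simp: indices_nonempty)

lemma margin_eq_SUP: "margin z n = (SUP u\<in>sphere 0 1. margin_at u)"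
  unfolding margin_def margin_at_def ..

lemma bdd_above_margin_at: "bdd_above (margin_at ` sphere 0 1)"
proof (rule bdd_aboveI2)
  fix u :: "real^'d" assume "u \<in> sphere 0 1"
  have "margin_at u \<le> u \<bullet> z 0" using margin_at_le n_ge_1 by simp
  also have "\<dots> \<le> norm u * norm (z 0)" by (rule norm_cauchy_schwarz)
  finally show "margin_at u \<le> norm (z 0)" using \<open>u \<in> sphere 0 1\<close> by simp
qed

lemma margin_at_le_margin: "norm u = 1 \<Longrightarrow> margin_at u \<le> margin z n"
  unfolding margin_eq_SUP by (rule cSUP_upper) (auto intro: bdd_above_margin_at)

lemma margin_attained:
  obtains u where "norm u = 1" "margin_at u = margin z n"
proof -
  obtain u where u: "u \<in> sphere 0 1" "\<And>v. v \<in> sphere 0 1 \<Longrightarrow> margin_at v \<le> margin_at u"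
    using continuous_attains_sup[of "sphere 0 1" margin_at]
      continuous_on_subset[OF continuous_margin_at] by auto
  have "margin z n = margin_at u"
    unfolding margin_eq_SUP by (rule cSup_eq_maximum) (use u in auto)
  with u that show ?thesis by simp
qed

lemma margin_pos: "margin z n > 0"
proof -
  obtain u where u: "\<And>i. i < n \<Longrightarrow> 0 < u \<bullet> z i"
    using separable unfolding linsep_def by blast
  then have "u \<noteq> 0" using n_ge_1 by fastforce
  then have "0 < margin_at (u /\<^sub>R norm u)"
    unfolding margin_at_gt_iff using u by (simp add: divide_pos_pos)
  also have "\<dots> \<le> margin z n" by (rule margin_at_le_margin) (use \<open>u \<noteq> 0\<close> in simp)
  finally show ?thesis .
qed

text \<open>Otherwise normalising \<open>w\<close> would beat the maximal margin.\<close>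
lemma norm_ge_1_if_margin_le:
  assumes w: "\<And>i. i < n \<Longrightarrow> margin z n \<le> w \<bullet> z i"
  shows "1 \<le> norm w"
proof (rule ccontr)
  assume "\<not> 1 \<le> norm w"
  moreover have "w \<noteq> 0" using w[of 0] n_ge_1 margin_pos by auto
  ultimately have nw: "0 < norm w" "norm w < 1" by auto
  have "margin z n < margin z n / norm w"
    using margin_pos nw by (simp add: less_divide_eq)
  also have "\<dots> \<le> margin_at (w /\<^sub>R norm w)"
    unfolding margin_at_ge_iff using w nw(1) by (simp add: divide_right_mono field_simps)
  also have "\<dots> \<le> margin z n"
    by (rule margin_at_le_margin) (use nw in simp)
  finally show False by simp
qed

lemma maximiser_unique:
  assumes "norm u1 = 1" "margin_at u1 = margin z n" "norm u2 = 1" "margin_at u2 = margin z n"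
  shows "u1 = u2"
proof (rule ccontr)
  assume "u1 \<noteq> u2"
  define v where "v = (1/2) *\<^sub>R (u1 + u2)"
  have uu: "u1 \<bullet> u1 = 1" "u2 \<bullet> u2 = 1" using assms by (simp_all add: dot_square_norm)
  have "0 < norm (u1 - u2)^2" using \<open>u1 \<noteq> u2\<close> by simp
  also have "norm (u1 - u2)^2 = 2 - 2 * (u1 \<bullet> u2)"
    using uu by (simp add: power2_norm_eq_inner inner_diff algebra_simps inner_commute)
  finally have "u1 \<bullet> u2 < 1" by simp
  then have "norm v ^ 2 < 1"
    using uu unfolding v_def by (simp add: power2_norm_eq_inner inner_add algebra_simps inner_commute)
  then have "norm v < 1" by (simp add: power_less_one_iff)
  moreover have "margin z n \<le> v \<bullet> z i" if "i < n" for i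
  proof -
    have "margin z n \<le> u1 \<bullet> z i" "margin z n \<le> u2 \<bullet> z i"
      using assms(2,4) that margin_at_ge_iff by (metis order_refl)+
    then show ?thesis unfolding v_def by (simp add: inner_add_left)
  qed
  ultimately show False using norm_ge_1_if_margin_le by fastforce
qed

lemma ubar_maximises: "norm ubar = 1" "margin_at ubar = margin z n"
proof -
  obtain u where u: "norm u = 1" "margin_at u = margin z n" by (rule margin_attained)
  have "norm ubar = 1 \<and> margin_at ubar = margin z n"
    unfolding maxmargin_dir_def margin_at_def[symmetric]
    by (rule theI[of _ u]) (use u maximiser_unique in auto)
  then show "norm ubar = 1" "margin_at ubar = margin z n" by auto
qed

lemma margin_le_ubar: "i < n \<Longrightarrow> margin z n \<le> ubar \<bullet> z i"
  using ubar_maximises(2) margin_at_ge_iff by (metis order_refl)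

lemma supp_vecs_iff: "i \<in> supp_vecs z n \<longleftrightarrow> i < n \<and> ubar \<bullet> z i = margin z n"
  unfolding supp_vecs_def by simp

lemma finite_supp_vecs: "finite (supp_vecs z n)"
  unfolding supp_vecs_def by simp

text \<open>First-order optimality of \<open>ubar\<close>: moving slightly along \<open>v\<close> keeps the active constraints
  (by hypothesis) and the inactive ones (by continuity) but shortens the vector.\<close>
lemma no_descent_direction:
  assumes v_ubar: "v \<bullet> ubar < 0" and v_supp: "\<And>i. i \<in> supp_vecs z n \<Longrightarrow> 0 \<le> v \<bullet> z i"
  shows False
proof -
  have feasible: "\<forall>\<^sub>F e in at_right (0::real). \<forall>i\<in>{..<n}. margin z n \<le> (ubar + e *\<^sub>R v) \<bullet> z i"
  proof (rule eventually_ball_finite, simp, rule ballI)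
    fix i assume i: "i \<in> {..<n}"
    show "\<forall>\<^sub>F e in at_right 0. margin z n \<le> (ubar + e *\<^sub>R v) \<bullet> z i"
    proof (cases "i \<in> supp_vecs z n")
      case True
      show ?thesis
        using eventually_at_right_less[of "0::real"]
        by eventually_elim (use True v_supp[OF True] in \<open>simp add: inner_add_left supp_vecs_iff\<close>)
    next
      case False
      then have "margin z n < ubar \<bullet> z i"
        using margin_le_ubar[of i] i supp_vecs_iff by (auto simp: less_le)
      moreover have "((\<lambda>e. ubar \<bullet> z i + e * (v \<bullet> z i)) \<longlongrightarrow> ubar \<bullet> z i + 0 * (v \<bullet> z i)) (at_right 0)"
        by (intro tendsto_intros)
      ultimately have "\<forall>\<^sub>F e in at_right 0. margin z n < ubar \<bullet> z i + e * (v \<bullet> z i)"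
        by (intro order_tendstoD(1)) auto
      then show ?thesis by eventually_elim (simp add: inner_add_left)
    qed
  qed
  have "((\<lambda>e. 2 * (v \<bullet> ubar) + e * (v \<bullet> v)) \<longlongrightarrow> 2 * (v \<bullet> ubar) + 0 * (v \<bullet> v)) (at_right 0)"
    by (intro tendsto_intros)
  then have "\<forall>\<^sub>F e in at_right (0::real). 2 * (v \<bullet> ubar) + e * (v \<bullet> v) < 0"
    using v_ubar by (auto elim: order_tendstoD(2))
  then have shorter: "\<forall>\<^sub>F e in at_right (0::real). norm (ubar + e *\<^sub>R v) < 1"
    using eventually_at_right_less[of "0::real"]
  proof eventually_elim
    case (elim e)
    have "norm (ubar + e *\<^sub>R v) ^ 2 = ubar \<bullet> ubar + e * (2 * (v \<bullet> ubar) + e * (v \<bullet> v))"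
      by (simp add: power2_norm_eq_inner inner_add inner_commute algebra_simps)
    also have "\<dots> < 1"
      using elim ubar_maximises(1) by (simp add: dot_square_norm mult_pos_neg)
    finally show ?case by (simp add: power_less_one_iff)
  qed
  obtain e :: real where "\<forall>i\<in>{..<n}. margin z n \<le> (ubar + e *\<^sub>R v) \<bullet> z i" "norm (ubar + e *\<^sub>R v) < 1"
    using eventually_happens'[OF trivial_limit_at_right_real eventually_conj[OF feasible shorter]] by blast
  then show False using norm_ge_1_if_margin_le by fastforce
qed

lemma exists_direction_if_alpha_nonpos:
  assumes a3: "assumption3 z n" and alpha: "alpha z n \<le> 0"
  obtains \<xi> where "norm \<xi> = 1" "\<xi> \<bullet> ubar = 0" "\<And>i. i \<in> supp_vecs z n \<Longrightarrow> \<xi> \<bullet> z i \<le> 0"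
proof -
  let ?S = "supp_vecs z n"
  define K where "K = {\<xi>::real^'d. norm \<xi> = 1 \<and> \<xi> \<bullet> ubar = 0}"
  define g where "g \<xi> = Max ((\<lambda>i. \<xi> \<bullet> z i) ` ?S)" for \<xi>
  have alpha_eq: "alpha z n = (INF \<xi>\<in>K. ereal (g \<xi>))"
    unfolding alpha_def K_def g_def ..
  have S_nonempty: "?S \<noteq> {}"
  proof
    assume "?S = {}"
    then have "(UNIV :: (real^'d) set) = {0}" using a3 unfolding assumption3_def by simp
    then have "axis undefined 1 = (0 :: real^'d)" by blast
    then show False by simp
  qed
  have "K \<noteq> {}"
  proof
    assume "K = {}"
    with alpha show False unfolding alpha_eq by (simp add: top_ereal_def)
  qed
  moreover have "compact K"
  proof -
    have "K = sphere 0 1 \<inter> {x. ubar \<bullet> x = 0}" unfolding K_def by (auto simp: inner_commute)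
    then show ?thesis by (simp add: compact_Int_closed closed_hyperplane)
  qed
  moreover have "continuous_on K g"
    unfolding g_def[abs_def]
    by (rule continuous_on_Max_finite[OF finite_supp_vecs S_nonempty]) (auto intro!: continuous_intros)
  ultimately obtain \<xi> where \<xi>: "\<xi> \<in> K" "\<And>\<eta>. \<eta> \<in> K \<Longrightarrow> g \<xi> \<le> g \<eta>"
    using continuous_attains_inf[of K g] by auto
  have "ereal (g \<xi>) \<le> alpha z n"
    unfolding alpha_eq by (rule INF_greatest) (simp add: \<xi>(2))
  then have "ereal (g \<xi>) \<le> 0" using alpha by (rule order_trans)
  then have "g \<xi> \<le> 0" by (simp only: ereal_less_eq(4))
  then have "\<And>i. i \<in> ?S \<Longrightarrow> \<xi> \<bullet> z i \<le> 0"
    unfolding g_def using finite_supp_vecs S_nonempty by (simp add: Max_le_iff)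
  with \<xi>(1) show ?thesis using that unfolding K_def by blast
qed
text \<open>Otherwise the component \<open>q\<close> of \<open>ubar\<close> orthogonal to that span, corrected by a large
  multiple of \<open>\<xi>\<close>, would be a descent direction.\<close>
lemma ubar_in_span_of_active:
  assumes \<xi>: "\<xi> \<bullet> ubar = 0" "\<And>i. i \<in> supp_vecs z n \<Longrightarrow> \<xi> \<bullet> z i \<le> 0"
  shows "ubar \<in> span (z ` {i \<in> supp_vecs z n. \<xi> \<bullet> z i = 0})"
proof -
  let ?S = "supp_vecs z n"
  let ?T = "{i \<in> ?S. \<xi> \<bullet> z i = 0}"
  obtain p q where pq: "p \<in> span (z ` ?T)" "\<And>w. w \<in> span (z ` ?T) \<Longrightarrow> orthogonal q w" "ubar = p + q"
    using orthogonal_subspace_decomp_exists[of "z ` ?T" ubar] by blast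
  have "q = 0"
  proof (rule ccontr)
    assume "q \<noteq> 0"
    define K where "K = (\<Sum>j\<in>?S. \<bar>q \<bullet> z j\<bar> / - (\<xi> \<bullet> z j))"
    define v where "v = - q - K *\<^sub>R \<xi>"
    have "q \<bullet> p = 0" using pq(2)[OF pq(1)] by (simp add: orthogonal_def)
    moreover have "\<xi> \<bullet> q = - (\<xi> \<bullet> p)" using \<xi>(1) pq(3) by (simp add: inner_add_right)
    ultimately have "v \<bullet> ubar = - (q \<bullet> q)"
      unfolding v_def pq(3) by (simp add: inner_diff_left inner_add_right inner_commute[of q p] algebra_simps)
    then have "v \<bullet> ubar < 0" using \<open>q \<noteq> 0\<close> by simp
    moreover have "0 \<le> v \<bullet> z j" if j: "j \<in> ?S" for j
    proof (cases "\<xi> \<bullet> z j = 0")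
      case True
      then have "q \<bullet> z j = 0" using j pq(2)[of "z j"] by (auto simp: orthogonal_def span_base)
      with True show ?thesis unfolding v_def by (simp add: inner_diff_left)
    next
      case False
      then have neg: "0 < - (\<xi> \<bullet> z j)" using \<xi>(2)[OF j] by simp
      have "\<bar>q \<bullet> z j\<bar> / - (\<xi> \<bullet> z j) \<le> K"
        unfolding K_def
      proof (rule member_le_sum[OF j _ finite_supp_vecs])
        fix k assume "k \<in> ?S - {j}"
        then have "0 \<le> - (\<xi> \<bullet> z k)" using \<xi>(2) by simp
        then show "0 \<le> \<bar>q \<bullet> z k\<bar> / - (\<xi> \<bullet> z k)" by (rule divide_nonneg_nonneg[OF abs_ge_zero])
      qed
      then have "\<bar>q \<bullet> z j\<bar> \<le> K * - (\<xi> \<bullet> z j)" using pos_divide_le_eq[OF neg] by blast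
      then show ?thesis unfolding v_def by (simp add: inner_diff_left)
    qed
    ultimately show False by (rule no_descent_direction)
  qed
  with pq show ?thesis by simp
qed

lemma exists_coplanar_if_alpha_nonpos:
  assumes a3: "assumption3 z n" and alpha: "alpha z n \<le> 0"
  obtains T i w where "T \<subseteq> {..<n}" "i < n" "i \<notin> T" "w \<in> span (z ` T)"
    "\<And>t. t \<in> T \<Longrightarrow> w \<bullet> z t = 1" "w \<bullet> z i = 1"
proof -
  let ?S = "supp_vecs z n"
  obtain \<xi> where \<xi>: "norm \<xi> = 1" "\<xi> \<bullet> ubar = 0" "\<And>i. i \<in> ?S \<Longrightarrow> \<xi> \<bullet> z i \<le> 0"
    using exists_direction_if_alpha_nonpos[OF a3 alpha] by blast
  define T where "T = {i \<in> ?S. \<xi> \<bullet> z i = 0}"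
  have "\<exists>i\<in>?S. \<xi> \<bullet> z i \<noteq> 0"
  proof (rule ccontr)
    assume "\<not> ?thesis"
    then have "\<And>x. x \<in> z ` ?S \<Longrightarrow> orthogonal \<xi> x" by (auto simp: orthogonal_def)
    with a3 have "orthogonal \<xi> \<xi>"
      unfolding assumption3_def by (metis UNIV_I orthogonal_to_span)
    with \<xi>(1) show False by (simp add: orthogonal_def)
  qed
  then obtain i where i: "i \<in> ?S" "\<xi> \<bullet> z i \<noteq> 0" by blast
  define w where "w = (1 / margin z n) *\<^sub>R ubar"
  show ?thesis
  proof (rule that)
    show "T \<subseteq> {..<n}" "i < n" "i \<notin> T"
      using i unfolding T_def supp_vecs_iff by auto
    show "w \<in> span (z ` T)"
      unfolding w_def T_def by (intro span_mul ubar_in_span_of_active \<xi>(2,3))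
    have "w \<bullet> z j = 1" if "j \<in> supp_vecs z n" for j
      using that margin_pos unfolding w_def supp_vecs_iff by simp
    then show "\<And>t. t \<in> T \<Longrightarrow> w \<bullet> z t = 1" "w \<bullet> z i = 1"
      using i(1) unfolding T_def by auto
  qed
qed
end

section \<open>Projection onto a span\<close>

text \<open>Gram--Schmidt: \<open>proj_list L y\<close> is the orthogonal projection of \<open>y\<close> onto \<open>span (set L)\<close>.
  A vector of \<open>L\<close> already in the span of its successors has zero residual and contributes
  nothing, because \<open>x / 0 = 0\<close>.\<close>
fun proj_list :: "'a::real_inner list \<Rightarrow> 'a \<Rightarrow> 'a" where
  "proj_list [] y = 0"
| "proj_list (v # vs) y = proj_list vs y +
     (inner y (v - proj_list vs v) / (norm (v - proj_list vs v))\<^sup>2) *\<^sub>R (v - proj_list vs v)"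

lemma proj_list_in_span: "proj_list L y \<in> span (set L)"
proof (induction L arbitrary: y)
  case (Cons v vs)
  have "span (set vs) \<subseteq> span (set (v # vs))" by (rule span_mono) auto
  with Cons have "proj_list vs y \<in> span (set (v # vs))" "proj_list vs v \<in> span (set (v # vs))"
    by blast+
  moreover have "v \<in> span (set (v # vs))" by (rule span_base) simp
  ultimately show ?case by (auto intro: span_add span_scale span_diff)
qed (simp add: span_zero)

lemma inner_span_eq_0: "(\<And>u. u \<in> S \<Longrightarrow> inner x u = 0) \<Longrightarrow> w \<in> span S \<Longrightarrow> inner x w = 0"
  using orthogonal_to_span[of w S x] unfolding orthogonal_def by blast

lemma proj_list_residual_orthogonal: "u \<in> set L \<Longrightarrow> inner (y - proj_list L y) u = 0"
proof (induction L arbitrary: y u)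
  case (Cons v vs)
  let ?P = "proj_list vs"
  define r where "r = v - ?P v"
  define c where "c = inner y r / (norm r)\<^sup>2"
  have IH_span: "inner (x - ?P x) w = 0" if "w \<in> span (set vs)" for x w
    by (rule inner_span_eq_0[OF _ that]) (rule Cons.IH)
  then have r_orth: "inner r w = 0" if "w \<in> span (set vs)" for w
    unfolding r_def using that .
  have "inner (y - ?P y - c *\<^sub>R r) u = 0"
  proof (cases "u = v")
    case True
    have "inner y r - c * inner r r = 0"
      unfolding c_def by (cases "r = 0") (simp_all add: dot_square_norm)
    moreover have "inner (y - ?P y) (?P v) = 0" "inner r (?P v) = 0" "inner (?P y) r = 0"
      using IH_span[OF proj_list_in_span] r_orth[OF proj_list_in_span] r_orth[OF proj_list_in_span, of y]
      by (simp_all add: inner_commute)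
    moreover have "u = r + ?P v" unfolding True r_def by simp
    ultimately show ?thesis by (simp add: inner_add_right inner_diff_left)
  next
    case False
    then have "u \<in> set vs" using Cons.prems by simp
    then have "inner r u = 0" by (simp add: r_orth span_base)
    then show ?thesis using Cons.IH[OF \<open>u \<in> set vs\<close>, of y] by (simp add: inner_diff_left)
  qed
  then show ?case unfolding r_def c_def by (simp add: algebra_simps)
qed simp

lemma borel_measurable_proj_list:
  fixes fs :: "('m \<Rightarrow> 'b::{second_countable_topology,real_inner}) list"
  assumes "\<And>f. f \<in> set fs \<Longrightarrow> f \<in> borel_measurable M" "g \<in> borel_measurable M"
  shows "(\<lambda>x. proj_list (map (\<lambda>f. f x) fs) (g x)) \<in> borel_measurable M"
  using assms
proof (induction fs arbitrary: g)
  case (Cons f fs)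
  then show ?case by simp
qed simp


text \<open>For \<open>t1 \<in> set ts\<close>, \<open>affine_foot z ts t1\<close> is the point of the affine hull of \<open>z ` set ts\<close>
  closest to the origin.\<close>
definition affine_foot :: "(nat \<Rightarrow> 'a::real_inner) \<Rightarrow> nat list \<Rightarrow> nat \<Rightarrow> 'a" where
  "affine_foot z ts t1 = z t1 - proj_list (map (\<lambda>t. z t - z t1) ts) (z t1)"

definition on_foot_hyperplane :: "(nat \<Rightarrow> 'a::real_inner) \<Rightarrow> nat list \<Rightarrow> nat \<Rightarrow> nat \<Rightarrow> bool" where
  "on_foot_hyperplane z ts t1 i \<longleftrightarrow>
     affine_foot z ts t1 \<noteq> 0 \<and> inner (affine_foot z ts t1) (z i - z t1) = 0"

lemma affine_foot_cong:
  "(\<And>t. t \<in> insert t1 (set ts) \<Longrightarrow> z t = z' t) \<Longrightarrow> affine_foot z ts t1 = affine_foot z' ts t1"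
  unfolding affine_foot_def by (simp cong: map_cong)

lemma on_foot_hyperplane_cong:
  "(\<And>t. t \<in> insert i (insert t1 (set ts)) \<Longrightarrow> z t = z' t) \<Longrightarrow>
     on_foot_hyperplane z ts t1 i = on_foot_hyperplane z' ts t1 i"
  unfolding on_foot_hyperplane_def using affine_foot_cong[of t1 ts z z'] by simp

text \<open>A hyperplane \<open>{y. w \<bullet> y = 1}\<close> with \<open>w\<close> in the span of the points it contains is the
  hyperplane through their affine hull perpendicular to the foot: \<open>w\<close> is a non-zero multiple of it.\<close>
lemma on_foot_hyperplane_if_coplanar:
  fixes z :: "nat \<Rightarrow> 'a::euclidean_space"
  assumes t1: "t1 \<in> set ts" and w: "w \<in> span (z ` set ts)" "\<And>t. t \<in> set ts \<Longrightarrow> inner w (z t) = 1"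
    and i: "inner w (z i) = 1"
  shows "on_foot_hyperplane z ts t1 i"
proof -
  define D where "D = (\<lambda>t. z t - z t1) ` set ts"
  define p where "p = proj_list (map (\<lambda>t. z t - z t1) ts) (z t1)"
  define r where "r = affine_foot z ts t1"
  have r_eq: "r = z t1 - p" unfolding r_def p_def affine_foot_def ..
  have set_D: "set (map (\<lambda>t. z t - z t1) ts) = D" unfolding D_def by simp
  have p_D: "p \<in> span D" unfolding p_def set_D[symmetric] by (rule proj_list_in_span)
  have r_D: "inner r u = 0" if "u \<in> span D" for u
    by (rule inner_span_eq_0[OF _ that])
       (unfold r_eq p_def set_D[symmetric], rule proj_list_residual_orthogonal)
  have w_D: "inner w u = 0" if "u \<in> span D" for u
    by (rule inner_span_eq_0[OF _ that]) (use w(2) t1 in \<open>auto simp: D_def inner_diff_right\<close>)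
  have "inner w r = 1"
    using w(2)[OF t1] w_D[OF p_D] unfolding r_eq by (simp add: inner_diff_right)
  have "span (z ` set ts) \<subseteq> span (insert (z t1) D)"
  proof (rule span_minimal[OF _ subspace_span], rule subsetI)
    fix x assume "x \<in> z ` set ts"
    then obtain t where t: "t \<in> set ts" "x = z t" by auto
    have "z t - z t1 \<in> span (insert (z t1) D)" "z t1 \<in> span (insert (z t1) D)"
      using t unfolding D_def by (auto intro: span_base)
    then have "(z t - z t1) + z t1 \<in> span (insert (z t1) D)" by (rule span_add)
    with t show "x \<in> span (insert (z t1) D)" by simp
  qed
  with w(1) obtain k where k: "w - k *\<^sub>R z t1 \<in> span D"
    using span_breakdown_eq by blast
  have "w - k *\<^sub>R r = (w - k *\<^sub>R z t1) + k *\<^sub>R p" unfolding r_eq by (simp add: algebra_simps)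
  also have "\<dots> \<in> span D" using k p_D by (intro span_add span_scale)
  finally have "w - k *\<^sub>R r \<in> span D" .
  then have "inner (w - k *\<^sub>R r) (w - k *\<^sub>R r) = 0"
    using w_D r_D by (simp add: inner_diff_left)
  then have w_r: "w = k *\<^sub>R r" by simp
  with \<open>inner w r = 1\<close> have "r \<noteq> 0" "k \<noteq> 0" by auto
  moreover have "k * inner r (z i - z t1) = 0"
    using w_r i w(2)[OF t1] by (metis inner_diff_right inner_scaleR_left right_minus_eq)
  ultimately show ?thesis unfolding on_foot_hyperplane_def r_def by simp
qed

lemma alpha_pos_if_not_on_foot_hyperplanes:
  fixes z :: "nat \<Rightarrow> real^'d"
  assumes "n \<ge> 1" "linsep z n" "assumption3 z n"
    and generic: "\<And>T i t1. T \<subseteq> {..<n} \<Longrightarrow> i \<in> {..<n} - T \<Longrightarrow> t1 \<in> T \<Longrightarrow>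
      \<not> on_foot_hyperplane z (sorted_list_of_set T) t1 i"
  shows "alpha z n > 0"
proof (rule ccontr)
  interpret max_margin z n using assms(1,2) by unfold_locales
  assume "\<not> alpha z n > 0"
  then obtain T i w where T: "T \<subseteq> {..<n}" "i < n" "i \<notin> T" "w \<in> span (z ` T)"
    "\<And>t. t \<in> T \<Longrightarrow> w \<bullet> z t = 1" "w \<bullet> z i = 1"
    using exists_coplanar_if_alpha_nonpos[OF assms(3)] by (metis not_less)
  have "T \<noteq> {}" using T(4,6) by (auto simp: span_empty)
  then obtain t1 where "t1 \<in> T" by blast
  moreover have "set (sorted_list_of_set T) = T" using T(1) finite_subset by fastforce
  ultimately have "on_foot_hyperplane z (sorted_list_of_set T) t1 i"
    using T by (intro on_foot_hyperplane_if_coplanar) simp_all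
  with generic[OF T(1) _ \<open>t1 \<in> T\<close>] T(2,3) show False by simp
qed


lemma hyperplane_in_null_sets_lborel:
  fixes a :: "'a::euclidean_space"
  assumes "a \<noteq> 0"
  shows "{y. inner a y = b} \<in> null_sets lborel"
proof -
  have "{y. inner a y = b} \<in> null_sets lebesgue"
    using negligible_hyperplane[of a b] assms by (simp add: negligible_iff_null_sets)
  moreover have "{y. inner a y = b} \<in> sets borel" by (intro borel_closed closed_hyperplane)
  ultimately show ?thesis by (auto simp: null_sets_completion_iff)
qed

section \<open>Null sets\<close>

lemma (in product_sigma_finite) AE_PiM_coordinatewise:
  assumes "finite I" "i \<in> I"
    and P: "{x \<in> space (Pi\<^sub>M I M). P x} \<in> sets (Pi\<^sub>M I M)"
    and sections: "\<And>x. AE y in M i. P (x(i := y))"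
  shows "AE x in Pi\<^sub>M I M. P x"
proof -
  define J where "J = I - {i}"
  have J: "J \<union> {i} = I" "J \<inter> {i} = {}" "finite J" using assms(1,2) unfolding J_def by auto
  interpret J: finite_product_sigma_finite M J by standard (fact J(3))
  interpret i: finite_product_sigma_finite M "{i}" by standard simp
  interpret Ji: pair_sigma_finite "Pi\<^sub>M J M" "Pi\<^sub>M {i} M" ..
  have merge: "merge J {i} \<in> measurable (Pi\<^sub>M J M \<Otimes>\<^sub>M Pi\<^sub>M {i} M) (Pi\<^sub>M I M)"
    using measurable_merge[of J "{i}" M] J(1) by simp
  have "AE y in Pi\<^sub>M J M \<Otimes>\<^sub>M Pi\<^sub>M {i} M. P (merge J {i} y)"
  proof (rule Ji.AE_pair_measure)
    have "{y \<in> space (Pi\<^sub>M J M \<Otimes>\<^sub>M Pi\<^sub>M {i} M). P (merge J {i} y)} =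
        merge J {i} -` {x \<in> space (Pi\<^sub>M I M). P x} \<inter> space (Pi\<^sub>M J M \<Otimes>\<^sub>M Pi\<^sub>M {i} M)"
      using measurable_space[OF merge] by auto
    then show "{y \<in> space (Pi\<^sub>M J M \<Otimes>\<^sub>M Pi\<^sub>M {i} M). P (merge J {i} y)} \<in> sets (Pi\<^sub>M J M \<Otimes>\<^sub>M Pi\<^sub>M {i} M)"
      using measurable_sets[OF merge P] by simp
    show "AE a in Pi\<^sub>M J M. AE b in Pi\<^sub>M {i} M. P (merge J {i} (a, b))"
    proof (rule AE_I2)
      fix a assume a: "a \<in> space (Pi\<^sub>M J M)"
      have "AE y in distr (Pi\<^sub>M {i} M) (M i) (\<lambda>b. b i). P (a(i := y))"
        using sections unfolding distr_singleton .
      from AE_distrD[OF measurable_component_singleton[OF singletonI] this]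
      have "AE b in Pi\<^sub>M {i} M. P (a(i := b i))" .
      moreover have "merge J {i} (a, b) = a(i := b i)" for b
        using a J(2) by (auto simp: merge_def space_PiM PiE_def extensional_def)
      ultimately show "AE b in Pi\<^sub>M {i} M. P (merge J {i} (a, b))" by simp
    qed
  qed
  then have "AE x in distr (Pi\<^sub>M J M \<Otimes>\<^sub>M Pi\<^sub>M {i} M) (Pi\<^sub>M I M) (merge J {i}). P x"
    by (subst AE_distr_iff[OF merge P])
  moreover have "distr (Pi\<^sub>M J M \<Otimes>\<^sub>M Pi\<^sub>M {i} M) (Pi\<^sub>M I M) (merge J {i}) = Pi\<^sub>M I M"
    using distr_merge[OF J(2,3)] J(1) by simp
  ultimately show ?thesis by metis
qed

lemma borel_measurable_affine_foot:
  fixes z :: "'m \<Rightarrow> nat \<Rightarrow> 'a::{second_countable_topology,real_inner}"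
  assumes "\<And>t. t \<in> insert t1 (set ts) \<Longrightarrow> (\<lambda>x. z x t) \<in> borel_measurable M"
  shows "(\<lambda>x. affine_foot (z x) ts t1) \<in> borel_measurable M"
proof -
  have "(\<lambda>x. proj_list (map (\<lambda>f. f x) (map (\<lambda>t x. z x t - z x t1) ts)) (z x t1)) \<in> borel_measurable M"
    using assms by (intro borel_measurable_proj_list) auto
  then show ?thesis unfolding affine_foot_def using assms by (simp add: comp_def)
qed

lemma AE_not_on_foot_hyperplane:
  fixes \<sigma> :: "nat \<Rightarrow> real"
  assumes "finite I" "set ts \<subseteq> I" "t1 \<in> set ts" "i \<in> I" "i \<notin> set ts" "\<sigma> i \<noteq> 0"
  shows "AE x in Pi\<^sub>M I (\<lambda>_. lborel :: 'a::euclidean_space measure).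
           \<not> on_foot_hyperplane (\<lambda>t. \<sigma> t *\<^sub>R x t) ts t1 i"
proof -
  let ?L = "\<lambda>_::nat. lborel :: 'a measure"
  interpret product_sigma_finite ?L
    by (simp add: product_sigma_finite_def lborel.sigma_finite_measure_axioms)
  show ?thesis
  proof (rule AE_PiM_coordinatewise[OF assms(1,4)])
    have component: "(\<lambda>x. x t) \<in> borel_measurable (Pi\<^sub>M I ?L)" if "t \<in> I" for t
      using measurable_component_singleton[OF that, of ?L] by simp
    define foot where "foot x = affine_foot (\<lambda>t. \<sigma> t *\<^sub>R x t) ts t1" for x :: "nat \<Rightarrow> 'a"
    have foot: "foot \<in> borel_measurable (Pi\<^sub>M I ?L)"
      unfolding foot_def[abs_def] using assms(2,3)
      by (intro borel_measurable_affine_foot borel_measurable_scaleR borel_measurable_const component) auto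
    define g where "g x = inner (foot x) (\<sigma> i *\<^sub>R x i - \<sigma> t1 *\<^sub>R x t1)" for x :: "nat \<Rightarrow> 'a"
    have "g \<in> borel_measurable (Pi\<^sub>M I ?L)"
      unfolding g_def[abs_def] using assms(2-4)
      by (intro borel_measurable_inner foot borel_measurable_diff borel_measurable_scaleR
          borel_measurable_const component) auto
    have "{x \<in> space (Pi\<^sub>M I ?L). \<not> on_foot_hyperplane (\<lambda>t. \<sigma> t *\<^sub>R x t) ts t1 i} =
        {x \<in> space (Pi\<^sub>M I ?L). foot x = 0} \<union> (space (Pi\<^sub>M I ?L) - {x \<in> space (Pi\<^sub>M I ?L). g x = 0})"
      unfolding on_foot_hyperplane_def foot_def g_def by auto
    then show "{x \<in> space (Pi\<^sub>M I ?L). \<not> on_foot_hyperplane (\<lambda>t. \<sigma> t *\<^sub>R x t) ts t1 i} \<in> sets (Pi\<^sub>M I ?L)"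
      using foot \<open>g \<in> borel_measurable (Pi\<^sub>M I ?L)\<close> by (simp add: sets.Un sets.Diff measurable_equality_set)
  next
    fix x :: "nat \<Rightarrow> 'a"
    define r where "r = affine_foot (\<lambda>t. \<sigma> t *\<^sub>R x t) ts t1"
    have "affine_foot (\<lambda>t. \<sigma> t *\<^sub>R (x(i := y)) t) ts t1 = r" for y
      unfolding r_def using assms(3,5) by (intro affine_foot_cong) auto
    then have "{y. on_foot_hyperplane (\<lambda>t. \<sigma> t *\<^sub>R (x(i := y)) t) ts t1 i}
        \<subseteq> {y. r \<noteq> 0 \<and> inner (\<sigma> i *\<^sub>R r) y = inner r (\<sigma> t1 *\<^sub>R x t1)}"
      using assms(3,5) by (auto simp: on_foot_hyperplane_def inner_diff_right)
    moreover have "{y. r \<noteq> 0 \<and> inner (\<sigma> i *\<^sub>R r) y = inner r (\<sigma> t1 *\<^sub>R x t1)} \<in> null_sets lborel"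
      using hyperplane_in_null_sets_lborel[of "\<sigma> i *\<^sub>R r"] assms(6) by (cases "r = 0") auto
    ultimately show "AE y in lborel. \<not> on_foot_hyperplane (\<lambda>t. \<sigma> t *\<^sub>R (x(i := y)) t) ts t1 i"
      by (auto intro: AE_I')
  qed
qed

lemma AE_distributed:
  assumes "distributed M N X f" "AE x in N. P x"
  shows "AE x in M. P (X x)"
proof -
  have "AE x in density N f. P x"
    using assms(2) unfolding AE_density[OF distributed_borel_measurable[OF assms(1)]]
    by (rule eventually_mono) simp
  then have "AE x in distr M N X. P x" unfolding distributed_distr_eq_density[OF assms(1)] .
  then show ?thesis by (rule AE_distrD[OF distributed_measurable[OF assms(1)]])
qed


theorem mainTheorem6:
  fixes M :: "'a measure" and n :: nat
    and X :: "nat \<Rightarrow> 'a \<Rightarrow> real^'d" and Y :: "nat \<Rightarrow> 'a \<Rightarrow> real"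
    and f :: "(nat \<Rightarrow> real^'d) \<Rightarrow> ennreal"
  assumes "prob_space M"
    and "n \<ge> 1"
    and "\<And>i. i < n \<Longrightarrow> Y i \<in> borel_measurable M"
    and "\<And>i \<omega>. i < n \<Longrightarrow> \<omega> \<in> space M \<Longrightarrow> Y i \<omega> \<in> {-1, 1}"
    and "\<And>i \<omega>. i < n \<Longrightarrow> \<omega> \<in> space M \<Longrightarrow> norm (X i \<omega>) \<le> 1"
    and "distributed M (PiM {..<n} (\<lambda>_. lborel)) (\<lambda>\<omega>. \<lambda>i\<in>{..<n}. X i \<omega>) f"
  shows "AE \<omega> in M.
           (linsep (\<lambda>i. Y i \<omega> *\<^sub>R X i \<omega>) n \<and> assumption3 (\<lambda>i. Y i \<omega> *\<^sub>R X i \<omega>) n)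
           \<longrightarrow> alpha (\<lambda>i. Y i \<omega> *\<^sub>R X i \<omega>) n > 0"
proof -
  \<comment> \<open>The statement is almost-sure.\<close>
  define signs where "signs = PiE {..<n} (\<lambda>_. {-1, 1::real})"
  define generic where "generic x \<longleftrightarrow> (\<forall>\<sigma>\<in>signs. \<forall>T\<in>Pow {..<n}. \<forall>i\<in>{..<n} - T. \<forall>t1\<in>T.
      \<not> on_foot_hyperplane (\<lambda>t. \<sigma> t *\<^sub>R x t) (sorted_list_of_set T) t1 i)" for x :: "nat \<Rightarrow> real^'d"
  have "AE x in PiM {..<n} (\<lambda>_. lborel). generic x"
    unfolding generic_def signs_def
    by (intro AE_finite_allI AE_not_on_foot_hyperplane)
       (auto simp: PiE_iff finite_subset[of _ "{..<n}"] intro: finite_PiE dest!: bspec)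
  then have "AE \<omega> in M. generic (\<lambda>i\<in>{..<n}. X i \<omega>)"
    using assms(6) by (rule AE_distributed[rotated])
  with AE_space show ?thesis
  proof eventually_elim
    case (elim \<omega>)
    let ?\<sigma> = "\<lambda>i\<in>{..<n}. Y i \<omega>"
    have "?\<sigma> \<in> signs" using assms(4) elim(1) unfolding signs_def by auto
    then have "\<not> on_foot_hyperplane (\<lambda>i. Y i \<omega> *\<^sub>R X i \<omega>) (sorted_list_of_set T) t1 i"
      if "T \<subseteq> {..<n}" "i \<in> {..<n} - T" "t1 \<in> T" for T i t1
      using elim(2) that unfolding generic_def
      by (subst on_foot_hyperplane_cong[where z' = "\<lambda>t. ?\<sigma> t *\<^sub>R (\<lambda>i\<in>{..<n}. X i \<omega>) t"])
         (use finite_subset[OF that(1)] in auto)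
    then show ?case using alpha_pos_if_not_on_foot_hyperplanes assms(2) by blast
  qed
qed

end
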